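(* Let $X$ be a topological space and let $\mathrm{Fer}(X)$ denote the set of closed subsets of $X$. For $W\in\mathrm{Fer}(X)$ put $\mathfrak{Z}(W)=\{Z\in\mathrm{Fer}(X)\mid Z\supseteq W\}$. For $W_1,W_2\in\mathrm{Fer}(X)$ with $W_1\subseteq W_2$, define $\delta^{W_2}_{W_1}:\mathfrak{Z}(W_1)\to\mathfrak{Z}(W_2)$ by $\delta^{W_2}_{W_1}(Z)=Z\cup W_2$. Then $\mathfrak{Z}$, together with the maps $\delta^{W_2}_{W_1}$, is a conciliation in $X$.
   Context: A pre-conciliation $G$ in a topological space $X$ consists of a set $G(W)$ for each closed set $W\in\mathrm{Fer}(X)$, and for all closed $W_1\subseteq W_2$ a map (called a mediation) $\delta^{W_2}_{W_1}:G(W_1)\to G(W_2)$, such that $\delta^W_W$ is the identity map of $G(W)$ for every closed $W$, and $\delta^{W_3}_{W_2}\circ\delta^{W_2}_{W_1}=\delta^{W_3}_{W_1}$ whenever $W_1\subseteq W_2\subseteq W_3$ are closed. A family $(W_i)_{i\in I}$ is a finite closed co-covering of $W\in\mathrm{Fer}(X)$ if $I$ is finite, each $W_i$ is closed, and $W=\bigcap_{i\in I}W_i$. A pre-conciliation $G$ is unified if for every nonempty closed $W$, every finite closed co-covering $(W_i)_{i\in I}$ of $W$, and all $t,s\in G(W)$: if $\delta^{W_j}_W(t)=\delta^{W_j}_W(s)$ for all $j\in I$, then $t=s$. A unified pre-conciliation $G$ is a conciliation if for every nonempty closed $W$, every finite closed co-covering $(W_i)_{i\in I}$ of $W$, and every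 family $(t_i)_{i\in I}$ with $t_i\in G(W_i)$ satisfying $\delta^{W_i\cup W_j}_{W_i}(t_i)=\delta^{W_i\cup W_j}_{W_j}(t_j)$ for all $i,j\in I$, there exists a unique $t\in G(W)$ with $\delta^{W_i}_W(t)=t_i$ for all $i\in I$. *)

theory Defs
  imports "HOL-Analysis.Analysis"
begin

text \<open>A pre-conciliation in the topological space X: G W is the set attached to the closed
  set W, and med W2 W1 is the mediation map from G W1 to G W2 (for closed W1 \<subseteq> W2).\<close>

definition pre_conciliation ::
  "'a topology \<Rightarrow> ('a set \<Rightarrow> 'b set) \<Rightarrow> ('a set \<Rightarrow> 'a set \<Rightarrow> 'b \<Rightarrow> 'b) \<Rightarrow> bool" where
  "pre_conciliation X G med \<longleftrightarrow>
     (\<forall>W1 W2. closedin X W1 \<and> closedin X W2 \<and> W1 \<subseteq> W2 \<longrightarrow>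
        (\<forall>t\<in>G W1. med W2 W1 t \<in> G W2)) \<and>
     (\<forall>W. closedin X W \<longrightarrow> (\<forall>t\<in>G W. med W W t = t)) \<and>
     (\<forall>W1 W2 W3. closedin X W1 \<and> closedin X W2 \<and> closedin X W3 \<and> W1 \<subseteq> W2 \<and> W2 \<subseteq> W3 \<longrightarrow>
        (\<forall>t\<in>G W1. med W3 W2 (med W2 W1 t) = med W3 W1 t))"

text \<open>Finite closed co-covering (W_i)_{i \<in> I} of W; the intersection is taken inside X,
  so that the empty family co-covers X.\<close>

definition finite_closed_cocovering ::
  "'a topology \<Rightarrow> 'a set \<Rightarrow> nat set \<Rightarrow> (nat \<Rightarrow> 'a set) \<Rightarrow> bool" where
  "finite_closed_cocovering X W I Ws \<longleftrightarrow>
     finite I \<and> (\<forall>i\<in>I. closedin X (Ws i)) \<and> W = topspace X \<inter> (\<Inter>i\<in>I. Ws i)"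

definition unified ::
  "'a topology \<Rightarrow> ('a set \<Rightarrow> 'b set) \<Rightarrow> ('a set \<Rightarrow> 'a set \<Rightarrow> 'b \<Rightarrow> 'b) \<Rightarrow> bool" where
  "unified X G med \<longleftrightarrow> pre_conciliation X G med \<and>
     (\<forall>W I Ws. closedin X W \<and> W \<noteq> {} \<and> finite_closed_cocovering X W I Ws \<longrightarrow>
        (\<forall>t\<in>G W. \<forall>s\<in>G W. (\<forall>j\<in>I. med (Ws j) W t = med (Ws j) W s) \<longrightarrow> t = s))"

definition conciliation ::
  "'a topology \<Rightarrow> ('a set \<Rightarrow> 'b set) \<Rightarrow> ('a set \<Rightarrow> 'a set \<Rightarrow> 'b \<Rightarrow> 'b) \<Rightarrow> bool" where
  "conciliation X G med \<longleftrightarrow> unified X G med \<and>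
     (\<forall>W I Ws ts. closedin X W \<and> W \<noteq> {} \<and> finite_closed_cocovering X W I Ws \<and>
        (\<forall>i\<in>I. ts i \<in> G (Ws i)) \<and>
        (\<forall>i\<in>I. \<forall>j\<in>I. med (Ws i \<union> Ws j) (Ws i) (ts i) = med (Ws i \<union> Ws j) (Ws j) (ts j)) \<longrightarrow>
        (\<exists>!t. t \<in> G W \<and> (\<forall>i\<in>I. med (Ws i) W t = ts i)))"

definition Zfrak :: "'a topology \<Rightarrow> 'a set \<Rightarrow> 'a set set" where
  "Zfrak X W = {Z. closedin X Z \<and> W \<subseteq> Z}"

end

theory Submission
  imports Defs
begin

text \<open>A closed set Z containing W = \<Inter>i W_i is recovered from its images Z \<union> W_i by
  distributivity, Z = \<Inter>i (Z \<union> W_i); this gives uniqueness. For existence, compatible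
  sections Z_i \<supseteq> W_i satisfy Z_i \<union> W_j = Z_j \<union> W_i, and then Z = \<Inter>i Z_i glues them; it is
  closed as an intersection of closed sets taken inside X.\<close>

lemma Un_Int_INT_distrib:
  assumes "Z \<subseteq> U"
  shows "Z \<union> (U \<inter> (\<Inter>i\<in>I. A i)) = U \<inter> (\<Inter>i\<in>I. Z \<union> A i)"
  using assms by auto

lemma eq_Int_INT_Un_if_superset:
  assumes "Z \<subseteq> U" and "U \<inter> (\<Inter>i\<in>I. A i) \<subseteq> Z"
  shows "Z = U \<inter> (\<Inter>i\<in>I. Z \<union> A i)"
proof -
  have "Z = Z \<union> (U \<inter> (\<Inter>i\<in>I. A i))" using assms(2) by blast
  also have "\<dots> = U \<inter> (\<Inter>i\<in>I. Z \<union> A i)" using assms(1) by (rule Un_Int_INT_distrib)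
  finally show ?thesis .
qed

lemma superset_eqI_Un_INT:
  assumes "Z \<subseteq> U" "Z' \<subseteq> U"
    and "U \<inter> (\<Inter>i\<in>I. A i) \<subseteq> Z" "U \<inter> (\<Inter>i\<in>I. A i) \<subseteq> Z'"
    and "\<And>i. i \<in> I \<Longrightarrow> Z \<union> A i = Z' \<union> A i"
  shows "Z = Z'"
proof -
  have "Z = U \<inter> (\<Inter>i\<in>I. Z \<union> A i)" using assms(1,3) by (rule eq_Int_INT_Un_if_superset)
  also have "\<dots> = U \<inter> (\<Inter>i\<in>I. Z' \<union> A i)" using assms(5) by simp
  also have "\<dots> = Z'" using assms(2,4) by (rule eq_Int_INT_Un_if_superset[symmetric])
  finally show ?thesis .
qed

lemma Int_INT_Un_glue:
  assumes "i \<in> I"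
    and "\<And>j. j \<in> I \<Longrightarrow> A j \<subseteq> Z j" "\<And>j. j \<in> I \<Longrightarrow> Z j \<subseteq> U"
    and compatible: "\<And>j. j \<in> I \<Longrightarrow> Z j \<union> A i = Z i \<union> A j"
  shows "(U \<inter> (\<Inter>j\<in>I. Z j)) \<union> A i = Z i"
proof -
  have "(U \<inter> (\<Inter>j\<in>I. Z j)) \<union> A i = U \<inter> (\<Inter>j\<in>I. Z j \<union> A i)"
    using assms(1-3) by auto
  also have "\<dots> = U \<inter> (\<Inter>j\<in>I. Z i \<union> A j)" using compatible by simp
  also have "\<dots> = Z i \<union> (U \<inter> (\<Inter>j\<in>I. A j))"
    using assms(3)[OF assms(1)] by (rule Un_Int_INT_distrib[symmetric])
  also have "\<dots> = Z i" using assms(1,2) by blast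
  finally show ?thesis .
qed

lemma closedin_topspace_Int_INT:
  assumes "\<And>i. i \<in> I \<Longrightarrow> closedin X (A i)"
  shows "closedin X (topspace X \<inter> (\<Inter>i\<in>I. A i))"
proof (cases "I = {}")
  case False
  then show ?thesis using assms by (intro closedin_Int closedin_INT) auto
qed simp

lemma pre_conciliation_Zfrak: "pre_conciliation X (Zfrak X) (\<lambda>W2 W1 Z. Z \<union> W2)"
  unfolding pre_conciliation_def Zfrak_def by auto

lemma unified_Zfrak: "unified X (Zfrak X) (\<lambda>W2 W1 Z. Z \<union> W2)"
  unfolding unified_def
proof (intro conjI pre_conciliation_Zfrak allI impI ballI)
  fix W I Ws Z Z'
  assume "closedin X W \<and> W \<noteq> {} \<and> finite_closed_cocovering X W I Ws"
    and Z: "Z \<in> Zfrak X W" and Z': "Z' \<in> Zfrak X W"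
    and "\<forall>j\<in>I. Z \<union> Ws j = Z' \<union> Ws j"
  moreover have "W = topspace X \<inter> (\<Inter>i\<in>I. Ws i)"
    using calculation by (simp add: finite_closed_cocovering_def)
  moreover have "Z \<subseteq> topspace X" "Z' \<subseteq> topspace X" "W \<subseteq> Z" "W \<subseteq> Z'"
    using Z Z' by (auto simp: Zfrak_def closedin_subset)
  ultimately show "Z = Z'"
    using superset_eqI_Un_INT[where U = "topspace X" and A = Ws] by simp
qed

lemma Zfrak_glue:
  assumes cocover: "finite_closed_cocovering X W I Ws"
    and sections: "\<And>i. i \<in> I \<Longrightarrow> Z i \<in> Zfrak X (Ws i)"
    and agree: "\<And>i j. i \<in> I \<Longrightarrow> j \<in> I \<Longrightarrow> Z i \<union> (Ws i \<union> Ws j) = Z j \<union> (Ws i \<union> Ws j)"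
  shows "\<exists>!Z'. Z' \<in> Zfrak X W \<and> (\<forall>i\<in>I. Z' \<union> Ws i = Z i)"
proof -
  have W: "W = topspace X \<inter> (\<Inter>i\<in>I. Ws i)"
    using cocover by (simp add: finite_closed_cocovering_def)
  have closed: "\<And>i. i \<in> I \<Longrightarrow> closedin X (Z i)" and above: "\<And>i. i \<in> I \<Longrightarrow> Ws i \<subseteq> Z i"
    using sections by (auto simp: Zfrak_def)
  have in_space: "\<And>i. i \<in> I \<Longrightarrow> Z i \<subseteq> topspace X"
    using closed closedin_subset by blast
  have compatible: "Z j \<union> Ws i = Z i \<union> Ws j" if "i \<in> I" "j \<in> I" for i j
    using agree[OF that] above[OF that(1)] above[OF that(2)] by blast
  define Z' where "Z' = topspace X \<inter> (\<Inter>i\<in>I. Z i)"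
  have "closedin X Z'"
    unfolding Z'_def using closed by (rule closedin_topspace_Int_INT)
  moreover have "W \<subseteq> Z'"
    unfolding W Z'_def using above by blast
  ultimately have "Z' \<in> Zfrak X W"
    by (simp add: Zfrak_def)
  moreover have "\<forall>i\<in>I. Z' \<union> Ws i = Z i"
  proof
    fix i assume i: "i \<in> I"
    then show "Z' \<union> Ws i = Z i"
      unfolding Z'_def using above in_space compatible[OF i] by (rule Int_INT_Un_glue)
  qed
  moreover have "Y = Z'" if Y: "Y \<in> Zfrak X W" and glues: "\<forall>i\<in>I. Y \<union> Ws i = Z i" for Y
  proof (rule superset_eqI_Un_INT[where U = "topspace X" and A = Ws and I = I])
    show "Y \<subseteq> topspace X" "topspace X \<inter> (\<Inter>i\<in>I. Ws i) \<subseteq> Y"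
      using Y by (auto simp: Zfrak_def W closedin_subset)
    show "Z' \<subseteq> topspace X" "topspace X \<inter> (\<Inter>i\<in>I. Ws i) \<subseteq> Z'"
      using \<open>Z' \<in> Zfrak X W\<close> by (auto simp: Zfrak_def W closedin_subset)
    show "Y \<union> Ws i = Z' \<union> Ws i" if "i \<in> I" for i
      using glues \<open>\<forall>i\<in>I. Z' \<union> Ws i = Z i\<close> that by simp
  qed
  ultimately show ?thesis by blast
qed

theorem mainTheorem1:
  fixes X :: "'a topology"
  shows "conciliation X (Zfrak X) (\<lambda>W2 W1 Z. Z \<union> W2)"
  unfolding conciliation_def
proof (intro conjI unified_Zfrak allI impI)
  fix W I Ws Z
  assume "closedin X W \<and> W \<noteq> {} \<and> finite_closed_cocovering X W I Ws \<and>
    (\<forall>i\<in>I. Z i \<in> Zfrak X (Ws i)) \<and>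
    (\<forall>i\<in>I. \<forall>j\<in>I. Z i \<union> (Ws i \<union> Ws j) = Z j \<union> (Ws i \<union> Ws j))"
  then show "\<exists>!Z'. Z' \<in> Zfrak X W \<and> (\<forall>i\<in>I. Z' \<union> Ws i = Z i)"
    by (intro Zfrak_glue) auto
qed

end
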